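(* Let $\mathcal{H}$ be a complex separable Hilbert space and let $A$ be a bounded, positive, injective operator on $\mathcal{H}$ that is Hankel with respect to an isometry $V$, i.e. $V^*A = AV$. Then the Wold decomposition of $V$ has the form $V = V_0 \oplus J$ on $\mathcal{H} = \mathcal{H}_0 \oplus \mathcal{H}'$, where $V_0$ is a pure isometry on $\mathcal{H}_0$ and $J$ is a self-adjoint unitary on $\mathcal{H}' = \mathcal{H}'_+ \oplus \mathcal{H}'_-$ with $Jh = h$ for $h \in \mathcal{H}'_+$ and $Jh = -h$ for $h \in \mathcal{H}'_-$. The subspaces $\mathcal{H}_0$, $\mathcal{H}'_+$ and $\mathcal{H}'_-$ are each invariant under $A$. If in addition $AV > 0$, then $\mathcal{H}'_- = \{0\}$ and $J = I$.
   Context: An operator $T$ is positive, written $T>0$, if $\langle Tx,x\rangle \ge 0$ for all $x$ in its domain and $T$ is injective. A pure isometry is one unitarily equivalent to the unilateral shift $M_z$ on $H^2 \otimes \mathbb{C}^n$ for some $n$. The Wold decomposition writes an isometry as the orthogonal direct sum of its pure part and a unitary part. *)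

theory Defs
  imports "HOL-Analysis.Analysis"
begin

text \<open>A complex Hilbert space is modelled on a carrier type 'a (an additive group)
  with an explicit complex scalar multiplication scal and a complex inner product ip,
  linear in the first argument and conjugate-linear in the second.\<close>

definition hnorm :: "('a \<Rightarrow> 'a \<Rightarrow> complex) \<Rightarrow> 'a \<Rightarrow> real" where
  "hnorm ip x = sqrt (Re (ip x x))"

definition complex_separable_hilbert ::
  "(complex \<Rightarrow> 'a::ab_group_add \<Rightarrow> 'a) \<Rightarrow> ('a \<Rightarrow> 'a \<Rightarrow> complex) \<Rightarrow> bool" where
  "complex_separable_hilbert scal ip \<longleftrightarrow>
     (\<forall>a x y. scal a (x + y) = scal a x + scal a y) \<and>
     (\<forall>a b x. scal (a + b) x = scal a x + scal b x) \<and>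
     (\<forall>a b x. scal a (scal b x) = scal (a * b) x) \<and>
     (\<forall>x. scal 1 x = x) \<and>
     (\<forall>x y. ip x y = cnj (ip y x)) \<and>
     (\<forall>x y z. ip (x + y) z = ip x z + ip y z) \<and>
     (\<forall>a x y. ip (scal a x) y = a * ip x y) \<and>
     (\<forall>x. 0 \<le> Re (ip x x)) \<and>
     (\<forall>x. ip x x = 0 \<longrightarrow> x = 0) \<and>
     \<comment> \<open>completeness w.r.t. the induced norm\<close>
     (\<forall>s::nat \<Rightarrow> 'a. (\<forall>e>0. \<exists>N. \<forall>m\<ge>N. \<forall>n\<ge>N. hnorm ip (s m - s n) < e) \<longrightarrow>
        (\<exists>l. \<forall>e>0. \<exists>N. \<forall>n\<ge>N. hnorm ip (s n - l) < e)) \<and>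
     \<comment> \<open>separability: a countable dense subset\<close>
     (\<exists>D. countable D \<and> (\<forall>x. \<forall>e>0. \<exists>d\<in>D. hnorm ip (x - d) < e))"

definition bounded_op ::
  "(complex \<Rightarrow> 'a::ab_group_add \<Rightarrow> 'a) \<Rightarrow> ('a \<Rightarrow> 'a \<Rightarrow> complex) \<Rightarrow> ('a \<Rightarrow> 'a) \<Rightarrow> bool" where
  "bounded_op scal ip T \<longleftrightarrow>
     (\<forall>x y. T (x + y) = T x + T y) \<and> (\<forall>a x. T (scal a x) = scal a (T x)) \<and>
     (\<exists>K. \<forall>x. hnorm ip (T x) \<le> K * hnorm ip x)"

definition isometry_op ::
  "(complex \<Rightarrow> 'a::ab_group_add \<Rightarrow> 'a) \<Rightarrow> ('a \<Rightarrow> 'a \<Rightarrow> complex) \<Rightarrow> ('a \<Rightarrow> 'a) \<Rightarrow> bool" where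
  "isometry_op scal ip V \<longleftrightarrow> bounded_op scal ip V \<and> (\<forall>x. hnorm ip (V x) = hnorm ip x)"

definition adjoint_op :: "('a \<Rightarrow> 'a \<Rightarrow> complex) \<Rightarrow> ('a \<Rightarrow> 'a) \<Rightarrow> 'a \<Rightarrow> 'a" where
  "adjoint_op ip T y = (THE z. \<forall>x. ip (T x) y = ip x z)"

definition positive_op :: "('a \<Rightarrow> 'a \<Rightarrow> complex) \<Rightarrow> ('a \<Rightarrow> 'a) \<Rightarrow> bool" where
  "positive_op ip T \<longleftrightarrow> (\<forall>x. Im (ip (T x) x) = 0 \<and> 0 \<le> Re (ip (T x) x)) \<and> inj T"

definition orth_compl :: "('a \<Rightarrow> 'a \<Rightarrow> complex) \<Rightarrow> 'a set \<Rightarrow> 'a set" where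
  "orth_compl ip S = {x. \<forall>y\<in>S. ip x y = 0}"

definition wold_unitary_part :: "('a \<Rightarrow> 'a) \<Rightarrow> 'a set" where
  "wold_unitary_part V = (\<Inter>n. range (V ^^ n))"

definition wold_pure_part :: "('a \<Rightarrow> 'a \<Rightarrow> complex) \<Rightarrow> ('a \<Rightarrow> 'a) \<Rightarrow> 'a set" where
  "wold_pure_part ip V = orth_compl ip (wold_unitary_part V)"

definition pure_on :: "('a::zero \<Rightarrow> 'a) \<Rightarrow> 'a set \<Rightarrow> bool" where
  "pure_on V M \<longleftrightarrow> V ` M \<subseteq> M \<and> (\<Inter>n. (V ^^ n) ` M) = {0}"

end

theory Submission
  imports Defs
begin

text \<open>On the unitary part H' of the Wold decomposition every vector has V-preimages of all orders.
  For y \<noteq> 0 the sequence a_k = <A V^k y, V^k y> is positive and bounded, and it is log-convex: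
  the Hankel relation V* A = A V gives <A V u, v> = <A u, V v>, so a_(k+1) = <A u, V^2 u> with
  u = V^k y, and Cauchy-Schwarz for the form <A _, _> applies. A bounded log-convex sequence is
  nonincreasing, while running the same estimate along the preimages of y \<in> H' shows that it
  cannot decrease either. Hence a_0 = a_1 = a_2, i.e. <A (V^2 y - y), V^2 y - y> = 0, and V^2 = I
  on H'. So J = V|H' is a self-adjoint unitary, H' splits into its \<plusminus>1 eigenspaces, and these are
  A-invariant because A maps eigenvectors of V to eigenvectors of V*, which for an isometry are
  eigenvectors of V again. If AV is positive, <A V m, m> = - <A m, m> rules out the eigenvalue -1.\<close>

section \<open>Real inequalities and log-convex sequences\<close>

lemma quadratic_nonneg_imp_discriminant_le:
  fixes a c d :: real
  assumes nonneg: "\<And>t. 0 \<le> a - 2*t*c + t*t*c*d" and "0 \<le> c" "0 \<le> d" "0 \<le> a"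
  shows "c \<le> a * d"
proof (cases "d = 0")
  case True
  show ?thesis
  proof (rule ccontr)
    assume "\<not> c \<le> a * d"
    hence "c > 0" using True by simp
    have "0 \<le> a - 2*((a+1)/c)*c" using nonneg[of "(a+1)/c"] True by simp
    also have "\<dots> = a - 2*(a+1)" using \<open>c > 0\<close> by simp
    finally show False using \<open>0 \<le> a\<close> by simp
  qed
next
  case False
  hence d: "d > 0" using \<open>0 \<le> d\<close> by simp
  have "0 \<le> a - 2*(1/d)*c + (1/d)*(1/d)*c*d" by (rule nonneg)
  also have "\<dots> = a - c/d" using d by (simp add: field_simps)
  finally show ?thesis using d by (simp add: field_simps)
qed

lemma log_convex_ratio_mono:
  fixes b :: "nat \<Rightarrow> real"
  assumes pos: "\<And>j. b j > 0" and log_convex: "\<And>j. (b (Suc j))^2 \<le> b j * b (Suc (Suc j))"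
    and "i \<le> j"
  shows "b (Suc i) / b i \<le> b (Suc j) / b j"
proof (rule lift_Suc_mono_le[OF _ \<open>i \<le> j\<close>])
  fix n
  have "b (Suc n) * b (Suc n) \<le> b n * b (Suc (Suc n))"
    using log_convex[of n] by (simp add: power2_eq_square)
  thus "b (Suc n) / b n \<le> b (Suc (Suc n)) / b (Suc n)"
    using pos[of n] pos[of "Suc n"] by (simp add: divide_simps mult.commute)
qed

lemma log_convex_le_ratio_pow:
  fixes b :: "nat \<Rightarrow> real"
  assumes pos: "\<And>j. b j > 0" and log_convex: "\<And>j. (b (Suc j))^2 \<le> b j * b (Suc (Suc j))"
    and "m \<le> n"
  shows "b m \<le> (b (Suc n) / b n)^m * b 0"
  using \<open>m \<le> n\<close>
proof (induction m)
  case 0 thus ?case by simp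
next
  case (Suc m)
  let ?r = "b (Suc n) / b n"
  have "b (Suc m) / b m \<le> ?r"
    using Suc.prems by (intro log_convex_ratio_mono[of b, OF pos log_convex]) simp
  hence "b (Suc m) \<le> ?r * b m" using pos[of m] by (simp add: pos_divide_le_eq)
  also have "\<dots> \<le> ?r * (?r^m * b 0)"
    using Suc pos[of n] pos[of "Suc n"] by (intro mult_left_mono) simp_all
  finally show ?case by simp
qed

text \<open>A ratio above 1 would make the sequence grow geometrically.\<close>
lemma bounded_log_convex_decreasing:
  fixes b :: "nat \<Rightarrow> real"
  assumes pos: "\<And>j. b j > 0" and log_convex: "\<And>j. (b (Suc j))^2 \<le> b j * b (Suc (Suc j))"
    and bounded: "\<And>j. b j \<le> M"
  shows "b (Suc k) \<le> b k"
proof (rule ccontr)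
  assume "\<not> b (Suc k) \<le> b k"
  define r where "r = b (Suc k) / b k"
  have r: "1 < r" using \<open>\<not> b (Suc k) \<le> b k\<close> pos[of k] unfolding r_def by (simp add: divide_simps)
  have grow: "r^n * b k \<le> b (k + n)" for n
  proof (induction n)
    case 0 thus ?case by simp
  next
    case (Suc n)
    have "r \<le> b (Suc (k+n)) / b (k+n)"
      unfolding r_def by (rule log_convex_ratio_mono[of b, OF pos log_convex]) simp
    hence "r * b (k+n) \<le> b (Suc (k+n))" using pos[of "k+n"] by (simp add: divide_simps)
    moreover have "r * (r^n * b k) \<le> r * b (k+n)" using Suc r by simp
    ultimately show ?case by simp
  qed
  obtain n where "M / b k < r^n" using real_arch_pow[OF r] by blast
  hence "M < r^n * b k" using pos[of k] by (simp add: divide_simps)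
  thus False using grow[of n] bounded[of "k+n"] by simp
qed

lemma pow_bounded_below_imp_ge_one:
  fixes r a C :: real
  assumes "0 < a" "0 \<le> r" and bound: "\<And>n. a \<le> r^n * C"
  shows "1 \<le> r"
proof (rule ccontr)
  assume "\<not> 1 \<le> r"
  have "0 < C" using bound[of 0] \<open>0 < a\<close> by simp
  obtain n where "r^n < a / C"
    using real_arch_pow_inv[of "a / C" r] \<open>0 < a\<close> \<open>0 < C\<close> \<open>\<not> 1 \<le> r\<close> by auto
  hence "r^n * C < a" using \<open>0 < C\<close> by (simp add: pos_less_divide_eq)
  thus False using bound[of n] by simp
qed

section \<open>Semi-inner products and Hilbert spaces\<close>

locale semi_inner_product =
  fixes scal :: "complex \<Rightarrow> 'a::ab_group_add \<Rightarrow> 'a" and F :: "'a \<Rightarrow> 'a \<Rightarrow> complex"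
  assumes add_left: "F (x + y) z = F x z + F y z"
    and scal_left: "F (scal a x) y = a * F x y"
    and cnj_commute: "F x y = cnj (F y x)"
    and self_nonneg: "0 \<le> Re (F x x)"
begin

lemma zero_left [simp]: "F 0 y = 0"
  using add_left[of 0 0 y] by simp

lemma minus_left: "F (- x) y = - F x y"
  using add_left[of x "- x" y] by (simp add: add_eq_0_iff2)

lemma diff_left: "F (x - y) z = F x z - F y z"
  using add_left[of x "- y" z] by (simp add: minus_left)

lemma zero_right [simp]: "F y 0 = 0"
  by (metis cnj_commute zero_left complex_cnj_zero)

lemma add_right: "F z (x + y) = F z x + F z y"
  by (metis cnj_commute add_left complex_cnj_add)

lemma diff_right: "F z (x - y) = F z x - F z y"
  by (metis cnj_commute diff_left complex_cnj_diff)

lemma scal_right: "F z (scal a y) = cnj a * F z y"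
  by (metis cnj_commute scal_left complex_cnj_mult)

lemma Im_self [simp]: "Im (F x x) = 0"
  using arg_cong[OF cnj_commute[of x x], of Im] by simp

lemma Re_swap: "Re (F y x) = Re (F x y)"
  using cnj_commute[of y x] by simp

lemma Re_self_add: "Re (F (x + y) (x + y)) = Re (F x x) + Re (F y y) + 2 * Re (F x y)"
  using Re_swap[of y x] by (simp add: add_left add_right)

lemma Re_self_diff: "Re (F (x - y) (x - y)) = Re (F x x) + Re (F y y) - 2 * Re (F x y)"
  using Re_swap[of y x] by (simp add: diff_left diff_right)

lemma Re_self_diff_scal:
  fixes x y t
  defines "c \<equiv> F x y"
  shows "Re (F (x - scal (of_real t * c) y) (x - scal (of_real t * c) y))
     = Re (F x x) - 2*t*(cmod c)^2 + t*t*(cmod c)^2 * Re (F y y)"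
proof -
  have "F (x - scal (of_real t * c) y) (x - scal (of_real t * c) y)
      = F x x - 2 * t * (c * cnj c) + t*t*(c * cnj c) * F y y"
    unfolding diff_left diff_right scal_left scal_right cnj_commute[of y x]
    by (simp add: c_def algebra_simps)
  also have "c * cnj c = of_real ((cmod c)^2)" by (rule complex_norm_square[symmetric])
  finally show ?thesis by simp
qed

lemma cauchy_schwarz: "(cmod (F x y))^2 \<le> Re (F x x) * Re (F y y)"
  by (rule quadratic_nonneg_imp_discriminant_le)
    (use Re_self_diff_scal[symmetric] self_nonneg in auto)

end

locale complex_hilbert = ip: semi_inner_product scal ip
  for scal :: "complex \<Rightarrow> 'a::ab_group_add \<Rightarrow> 'a" and ip :: "'a \<Rightarrow> 'a \<Rightarrow> complex" +
  assumes scal_add_right: "scal a (x + y) = scal a x + scal a y"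
    and scal_add_left: "scal (a + b) x = scal a x + scal b x"
    and scal_scal: "scal a (scal b x) = scal (a * b) x"
    and scal_one [simp]: "scal 1 x = x"
    and ip_self_eq_0: "ip x x = 0 \<Longrightarrow> x = 0"
    and complete: "\<forall>e>0. \<exists>N. \<forall>m\<ge>N. \<forall>n\<ge>N. hnorm ip ((s :: nat \<Rightarrow> 'a) m - s n) < e \<Longrightarrow>
      \<exists>l. \<forall>e>0. \<exists>N. \<forall>n\<ge>N. hnorm ip (s n - l) < e"

lemma complex_separable_hilbert_imp_complex_hilbert:
  "complex_separable_hilbert scal ip \<Longrightarrow> complex_hilbert scal ip"
  unfolding complex_separable_hilbert_def complex_hilbert_def complex_hilbert_axioms_def
    semi_inner_product_def
  by (elim conjE) (intro conjI; assumption)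

context complex_hilbert
begin

lemma scal_zero_left [simp]: "scal 0 x = 0"
  using scal_add_left[of 0 0 x] by simp

lemma scal_diff_right: "scal a (x - y) = scal a x - scal a y"
  using scal_add_right[of a "x - y" y] by (simp add: eq_diff_eq)

lemma scal_minus_one: "scal (- 1) x = - x"
  using scal_add_left[of 1 "- 1" x] by (simp add: eq_neg_iff_add_eq_0 add.commute)

lemma scal_two: "scal 2 x = x + x"
  using scal_add_left[of 1 1 x] by simp

lemma hnorm_nonneg [simp]: "0 \<le> hnorm ip x"
  unfolding hnorm_def by (simp add: ip.self_nonneg)

lemma hnorm_sq: "(hnorm ip x)^2 = Re (ip x x)"
  unfolding hnorm_def by (simp add: ip.self_nonneg)

lemma hnorm_zero [simp]: "hnorm ip 0 = 0"
  unfolding hnorm_def by simp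

lemma hnorm_eq_0_iff [simp]: "hnorm ip x = 0 \<longleftrightarrow> x = 0"
proof
  assume "hnorm ip x = 0"
  hence "Re (ip x x) = 0" using hnorm_sq[of x] by simp
  hence "ip x x = 0" using ip.Im_self[of x] by (simp add: complex_eq_iff)
  thus "x = 0" by (rule ip_self_eq_0)
qed simp

lemma cauchy_schwarz: "cmod (ip x y) \<le> hnorm ip x * hnorm ip y"
proof (rule power2_le_imp_le)
  show "(cmod (ip x y))^2 \<le> (hnorm ip x * hnorm ip y)^2"
    unfolding power_mult_distrib hnorm_sq by (rule ip.cauchy_schwarz)
qed simp

lemma hnorm_triangle: "hnorm ip (x + y) \<le> hnorm ip x + hnorm ip y"
proof (rule power2_le_imp_le)
  have "Re (ip x y) \<le> hnorm ip x * hnorm ip y"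
    using cauchy_schwarz[of x y] complex_Re_le_cmod[of "ip x y"] by linarith
  thus "(hnorm ip (x + y))^2 \<le> (hnorm ip x + hnorm ip y)^2"
    by (simp add: hnorm_sq ip.Re_self_add power2_sum)
qed simp

lemma hnorm_scal: "hnorm ip (scal a x) = cmod a * hnorm ip x"
proof (rule power2_eq_imp_eq)
  have "ip (scal a x) (scal a x) = (a * cnj a) * ip x x"
    by (simp add: ip.scal_left ip.scal_right)
  also have "a * cnj a = of_real ((cmod a)^2)" by (rule complex_norm_square[symmetric])
  finally show "(hnorm ip (scal a x))^2 = (cmod a * hnorm ip x)^2"
    by (simp add: hnorm_sq power_mult_distrib)
qed simp_all

lemma hnorm_minus_commute: "hnorm ip (x - y) = hnorm ip (y - x)"
  using hnorm_scal[of "- 1" "x - y"] by (simp add: scal_minus_one)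

lemma hnorm_triangle_diff: "hnorm ip (x - y) \<le> hnorm ip (x - z) + hnorm ip (z - y)"
  using hnorm_triangle[of "x - z" "z - y"] by simp

lemma parallelogram_law:
  "(hnorm ip (x + y))^2 + (hnorm ip (x - y))^2 = 2 * (hnorm ip x)^2 + 2 * (hnorm ip y)^2"
  by (simp add: hnorm_sq ip.Re_self_add ip.Re_self_diff)

lemma eq_if_hnorm_eq_Re_ip_eq:
  assumes "hnorm ip x = hnorm ip y" "Re (ip x y) = (hnorm ip y)^2"
  shows "x = y"
proof -
  have "(hnorm ip (x - y))^2 = (hnorm ip x)^2 + (hnorm ip y)^2 - 2 * Re (ip x y)"
    by (simp add: hnorm_sq ip.Re_self_diff)
  also have "\<dots> = 0" using assms by simp
  finally have "(hnorm ip (x - y))^2 = 0" .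
  thus ?thesis by simp
qed

definition hcauchy :: "(nat \<Rightarrow> 'a) \<Rightarrow> bool" where
  "hcauchy s \<longleftrightarrow> (\<forall>e>0. \<exists>N. \<forall>m\<ge>N. \<forall>n\<ge>N. hnorm ip (s m - s n) < e)"

definition hconverges :: "(nat \<Rightarrow> 'a) \<Rightarrow> 'a \<Rightarrow> bool" where
  "hconverges s l \<longleftrightarrow> (\<lambda>n. hnorm ip (s n - l)) \<longlonglongrightarrow> 0"

definition hclosed :: "'a set \<Rightarrow> bool" where
  "hclosed M \<longleftrightarrow> (\<forall>s l. (\<forall>n. s n \<in> M) \<longrightarrow> hconverges s l \<longrightarrow> l \<in> M)"

definition hsubspace :: "'a set \<Rightarrow> bool" where
  "hsubspace M \<longleftrightarrow> 0 \<in> M \<and> (\<forall>x\<in>M. \<forall>y\<in>M. x + y \<in> M) \<and> (\<forall>a. \<forall>x\<in>M. scal a x \<in> M)"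

lemma hconverges_iff: "hconverges s l \<longleftrightarrow> (\<forall>e>0. \<exists>N. \<forall>n\<ge>N. hnorm ip (s n - l) < e)"
  unfolding hconverges_def LIMSEQ_iff by simp

lemma hcauchy_imp_hconverges: "hcauchy s \<Longrightarrow> \<exists>l. hconverges s l"
  unfolding hcauchy_def hconverges_iff by (rule complete)

lemma hconverges_imp_hcauchy:
  assumes "hconverges s l" shows "hcauchy s"
  unfolding hcauchy_def
proof (intro allI impI)
  fix e :: real assume "e > 0"
  then obtain N where N: "\<And>n. n \<ge> N \<Longrightarrow> hnorm ip (s n - l) < e/2"
    using assms unfolding hconverges_iff by (meson half_gt_zero)
  have "hnorm ip (s m - s n) < e" if "N \<le> m" "N \<le> n" for m n
    using hnorm_triangle_diff[of "s m" "s n" l] hnorm_minus_commute[of l "s n"] N[OF \<open>N \<le> m\<close>] N[OF \<open>N \<le> n\<close>]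
    by linarith
  thus "\<exists>N. \<forall>m\<ge>N. \<forall>n\<ge>N. hnorm ip (s m - s n) < e" by blast
qed

lemma hconverges_unique:
  assumes "hconverges s l" "hconverges s l'" shows "l = l'"
proof -
  have "hnorm ip (l - l') \<le> hnorm ip (s n - l) + hnorm ip (s n - l')" for n
    using hnorm_triangle_diff[of l l' "s n"] hnorm_minus_commute[of l "s n"] by linarith
  moreover have "(\<lambda>n. hnorm ip (s n - l) + hnorm ip (s n - l')) \<longlonglongrightarrow> 0 + 0"
    using assms unfolding hconverges_def by (rule tendsto_add)
  ultimately have "hnorm ip (l - l') \<le> 0" by (simp add: LIMSEQ_le_const)
  hence "hnorm ip (l - l') = 0" by (intro antisym) simp_all
  thus ?thesis by simp
qed

lemma hcauchyI_sq_bound: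
  assumes bound: "\<And>m n. (hnorm ip (s m - s n))^2 \<le> f m + f n" and "f \<longlonglongrightarrow> 0"
  shows "hcauchy s"
  unfolding hcauchy_def
proof (intro allI impI)
  fix e :: real assume "e > 0"
  hence "e^2 / 2 > 0" by simp
  then obtain N where "\<forall>n\<ge>N. norm (f n - 0) < e^2 / 2"
    using \<open>f \<longlonglongrightarrow> 0\<close> unfolding LIMSEQ_iff by blast
  hence N: "\<And>n. n \<ge> N \<Longrightarrow> f n < e^2 / 2" by auto
  have "hnorm ip (s m - s n) < e" if "N \<le> m" "N \<le> n" for m n
  proof (rule power2_less_imp_less)
    show "(hnorm ip (s m - s n))^2 < e^2" using bound[of m n] N[OF \<open>N \<le> m\<close>] N[OF \<open>N \<le> n\<close>] by linarith
  qed (use \<open>e > 0\<close> in simp)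
  thus "\<exists>N. \<forall>m\<ge>N. \<forall>n\<ge>N. hnorm ip (s m - s n) < e" by blast
qed

lemma hsubspace_Inter: "(\<And>n. hsubspace (M n)) \<Longrightarrow> hsubspace (\<Inter>n. M n)"
  unfolding hsubspace_def by blast

lemma hclosed_Inter: "(\<And>n. hclosed (M n)) \<Longrightarrow> hclosed (\<Inter>n. M n)"
  unfolding hclosed_def by blast

lemma minimizing_sequence_hcauchy:
  assumes "hsubspace M" and ms: "\<And>n. ms n \<in> M"
    and d: "\<And>m. m \<in> M \<Longrightarrow> d \<le> hnorm ip (x - m)" "0 \<le> d"
    and f: "\<And>n. (hnorm ip (x - ms n))^2 \<le> d^2 + f n" "f \<longlonglongrightarrow> 0"
  shows "hcauchy ms"
proof (rule hcauchyI_sq_bound)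
  fix i j
  define u v where "u = x - ms i" and "v = x - ms j"
  have "scal (1/2) (ms i + ms j) \<in> M" using \<open>hsubspace M\<close> ms unfolding hsubspace_def by blast
  hence "(2 * d)^2 \<le> (2 * hnorm ip (x - scal (1/2) (ms i + ms j)))^2"
    using d by (intro power_mono) auto
  also have "2 * hnorm ip (x - scal (1/2) (ms i + ms j)) = hnorm ip (scal 2 (x - scal (1/2) (ms i + ms j)))"
    by (simp add: hnorm_scal)
  also have "scal 2 (x - scal (1/2) (ms i + ms j)) = u + v"
    unfolding u_def v_def scal_diff_right scal_scal scal_two by simp
  finally have "4 * d^2 \<le> (hnorm ip (u + v))^2" by (simp add: power_mult_distrib)
  hence "(hnorm ip (u - v))^2 \<le> 2 * f i + 2 * f j"
    using parallelogram_law[of u v] f(1)[of i, folded u_def] f(1)[of j, folded v_def] by linarith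
  moreover have "hnorm ip (u - v) = hnorm ip (ms i - ms j)"
    unfolding u_def v_def using hnorm_minus_commute[of "ms i" "ms j"] by simp
  ultimately show "(hnorm ip (ms i - ms j))^2 \<le> 2 * f i + 2 * f j" by simp
qed (use f(2) in \<open>intro tendsto_mult_right_zero\<close>)

lemma nearest_point_exists:
  assumes "hsubspace M" "hclosed M"
  obtains m where "m \<in> M" "\<And>m'. m' \<in> M \<Longrightarrow> hnorm ip (x - m) \<le> hnorm ip (x - m')"
proof -
  define D where "D = (\<lambda>m. hnorm ip (x - m)) ` M"
  define d where "d = Inf D"
  have "D \<noteq> {}" using \<open>hsubspace M\<close> unfolding D_def hsubspace_def by blast
  have "bdd_below D" unfolding D_def by (rule bdd_belowI[of _ 0]) auto
  have d_le: "d \<le> hnorm ip (x - m)" if "m \<in> M" for m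
    unfolding d_def D_def using \<open>bdd_below D\<close> D_def that by (auto intro: cInf_lower)
  have "0 \<le> d" unfolding d_def using \<open>D \<noteq> {}\<close> by (rule cInf_greatest) (auto simp: D_def)
  have "\<exists>m\<in>M. hnorm ip (x - m) < d + inverse (real (Suc n))" for n
    using cInf_lessD[OF \<open>D \<noteq> {}\<close>, of "d + inverse (real (Suc n))"] unfolding d_def D_def by auto
  then obtain ms where ms: "\<And>n. ms n \<in> M" "\<And>n. hnorm ip (x - ms n) < d + inverse (real (Suc n))"
    by metis
  define f where "f n = (d + inverse (real (Suc n)))^2 - d^2" for n
  have bound: "(hnorm ip (x - ms n))^2 \<le> d^2 + f n" for n
    unfolding f_def using ms(2)[of n] by (simp add: power_mono)
  have "(\<lambda>n. (d + inverse (real (Suc n)))^2 - d^2) \<longlonglongrightarrow> (d + 0)^2 - d^2"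
    by (intro tendsto_intros LIMSEQ_inverse_real_of_nat)
  hence "f \<longlonglongrightarrow> 0" unfolding f_def by simp
  with \<open>hsubspace M\<close> ms(1) d_le \<open>0 \<le> d\<close> bound have "hcauchy ms"
    by (rule minimizing_sequence_hcauchy)
  then obtain l where l: "hconverges ms l" using hcauchy_imp_hconverges by blast
  have "l \<in> M" using \<open>hclosed M\<close> ms(1) l unfolding hclosed_def by blast
  have "hnorm ip (x - l) \<le> d + inverse (real (Suc n)) + hnorm ip (ms n - l)" for n
    using hnorm_triangle_diff[of x l "ms n"] ms(2)[of n] by linarith
  moreover have "(\<lambda>n. d + inverse (real (Suc n)) + hnorm ip (ms n - l)) \<longlonglongrightarrow> d + 0 + 0"
    using l unfolding hconverges_def by (intro tendsto_intros LIMSEQ_inverse_real_of_nat)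
  ultimately have "hnorm ip (x - l) \<le> d" by (simp add: LIMSEQ_le_const)
  thus ?thesis using that \<open>l \<in> M\<close> d_le by force
qed

lemma nearest_point_orthogonal:
  assumes "hsubspace M" "m \<in> M" "y \<in> M"
    and nearest: "\<And>m'. m' \<in> M \<Longrightarrow> hnorm ip (x - m) \<le> hnorm ip (x - m')"
  shows "ip (x - m) y = 0"
proof -
  define c where "c = ip (x - m) y"
  have "0 \<le> 0 - 2*t*(cmod c)^2 + t*t*(cmod c)^2 * Re (ip y y)" for t :: real
  proof -
    have "m + scal (of_real t * c) y \<in> M"
      using \<open>hsubspace M\<close> \<open>m \<in> M\<close> \<open>y \<in> M\<close> unfolding hsubspace_def by blast
    from nearest[OF this] have "(hnorm ip (x - m))^2 \<le> (hnorm ip (x - m - scal (of_real t * c) y))^2"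
      by (simp add: diff_diff_eq power_mono)
    thus ?thesis unfolding hnorm_sq c_def ip.Re_self_diff_scal by simp
  qed
  hence "(cmod c)^2 \<le> 0 * Re (ip y y)"
    by (intro quadratic_nonneg_imp_discriminant_le) (auto simp: ip.self_nonneg)
  thus ?thesis unfolding c_def by simp
qed

lemma orthogonal_projection_exists:
  assumes "hsubspace M" "hclosed M"
  shows "\<exists>m\<in>M. \<forall>y\<in>M. ip (x - m) y = 0"
  using nearest_point_exists[OF assms] nearest_point_orthogonal[OF \<open>hsubspace M\<close>] by metis

lemma adjoint_opI:
  assumes "\<And>y. ip (T y) w = ip y z"
  shows "adjoint_op ip T w = z"
  unfolding adjoint_op_def
proof (rule the_equality)
  fix z' assume "\<forall>y. ip (T y) w = ip y z'"
  hence "ip (z' - z) (z' - z) = 0" using assms by (simp add: ip.diff_right)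
  hence "z' - z = 0" by (rule ip_self_eq_0)
  thus "z' = z" by simp
qed (use assms in simp)

section \<open>Isometries and the Wold decomposition\<close>

lemma isometry_add: "isometry_op scal ip T \<Longrightarrow> T (x + y) = T x + T y"
  unfolding isometry_op_def bounded_op_def by blast

lemma isometry_scal: "isometry_op scal ip T \<Longrightarrow> T (scal a x) = scal a (T x)"
  unfolding isometry_op_def bounded_op_def by blast

lemma isometry_hnorm: "isometry_op scal ip T \<Longrightarrow> hnorm ip (T x) = hnorm ip x"
  unfolding isometry_op_def by blast

lemma isometry_zero: "isometry_op scal ip T \<Longrightarrow> T 0 = 0"
  using isometry_add[of T 0 0] by simp

lemma isometry_diff: "isometry_op scal ip T \<Longrightarrow> T (x - y) = T x - T y"
  using isometry_add[of T "x - y" y] by (simp add: eq_diff_eq)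

lemma isometry_inj:
  assumes "isometry_op scal ip T" "T x = T y" shows "x = y"
proof -
  have "hnorm ip (x - y) = hnorm ip (T x - T y)"
    by (simp add: isometry_diff[OF assms(1), symmetric] isometry_hnorm[OF assms(1)])
  thus ?thesis using \<open>T x = T y\<close> by simp
qed

lemma isometry_ip:
  assumes "isometry_op scal ip T" shows "ip (T x) (T y) = ip x y"
proof -
  have Re: "Re (ip (T u) (T v)) = Re (ip u v)" for u v
    using ip.Re_self_add[of u v] ip.Re_self_add[of "T u" "T v"]
      isometry_hnorm[OF assms, of "u + v"] isometry_hnorm[OF assms, of u] isometry_hnorm[OF assms, of v]
    unfolding isometry_add[OF assms] hnorm_def by simp
  have "Im (ip z w) = Re (ip z (scal \<i> w))" for z w by (simp add: ip.scal_right)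
  hence "Im (ip (T x) (T y)) = Im (ip x y)"
    using Re[of x "scal \<i> y"] by (simp add: isometry_scal[OF assms])
  thus ?thesis using Re[of x y] by (simp add: complex_eq_iff)
qed

lemma isometry_id: "isometry_op scal ip id"
  unfolding isometry_op_def bounded_op_def by (intro conjI allI exI[of _ 1]) simp_all

lemma isometry_comp:
  assumes "isometry_op scal ip S" "isometry_op scal ip T" shows "isometry_op scal ip (S \<circ> T)"
  using assms unfolding isometry_op_def bounded_op_def
  by (elim conjE; intro conjI allI exI[of _ 1]) simp_all

lemma isometry_funpow: "isometry_op scal ip T \<Longrightarrow> isometry_op scal ip (T ^^ n)"
  by (induction n) (simp_all add: isometry_id isometry_comp)

lemma isometry_range_hsubspace:
  assumes "isometry_op scal ip T" shows "hsubspace (range T)"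
  unfolding hsubspace_def
proof (intro conjI ballI allI)
  show "0 \<in> range T" using isometry_zero[OF assms] by (metis rangeI)
  fix a u v assume "u \<in> range T" "v \<in> range T"
  then obtain x y where "u = T x" "v = T y" by blast
  thus "u + v \<in> range T" "scal a u \<in> range T"
    by (simp_all add: isometry_add[OF assms, symmetric] isometry_scal[OF assms, symmetric])
qed

lemma isometry_range_hclosed:
  assumes T: "isometry_op scal ip T" shows "hclosed (range T)"
  unfolding hclosed_def
proof (intro allI impI)
  fix s l assume "\<forall>n. s n \<in> range T" and "hconverges s l"
  hence "\<forall>n. \<exists>y. s n = T y" by blast
  then obtain t where t: "\<And>n. s n = T (t n)" by metis
  have hnorm_t: "hnorm ip (t m - u) = hnorm ip (s m - T u)" for m u
    unfolding t isometry_diff[OF T, symmetric] isometry_hnorm[OF T] ..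
  have "hcauchy t"
    using hconverges_imp_hcauchy[OF \<open>hconverges s l\<close>] unfolding hcauchy_def t
    by (simp add: isometry_diff[OF T, symmetric] isometry_hnorm[OF T])
  then obtain l' where "hconverges t l'" using hcauchy_imp_hconverges by blast
  hence "hconverges s (T l')" unfolding hconverges_def hnorm_t .
  with \<open>hconverges s l\<close> have "l = T l'" by (rule hconverges_unique)
  thus "l \<in> range T" by simp
qed

lemma isometry_adjoint:
  assumes T: "isometry_op scal ip T" shows "ip (T y) w = ip y (adjoint_op ip T w)"
proof -
  obtain y0 where y0: "\<forall>z\<in>range T. ip (w - T y0) z = 0"
    using orthogonal_projection_exists[OF isometry_range_hsubspace[OF T] isometry_range_hclosed[OF T]]
    by blast
  have "ip (T y) w = ip y y0" for y
  proof -
    have "ip (T y) (w - T y0) = 0" using y0 ip.cnj_commute[of "T y" "w - T y0"] by simp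
    thus ?thesis by (simp add: ip.diff_right isometry_ip[OF T])
  qed
  thus ?thesis using adjoint_opI[of T w y0] by simp
qed

lemma isometry_adjoint_eigenvector:
  assumes T: "isometry_op scal ip T" and "cmod c = 1" and eigen: "adjoint_op ip T w = scal c w"
  shows "T w = scal (cnj c) w"
proof (rule eq_if_hnorm_eq_Re_ip_eq)
  have c: "c * cnj c = 1" using \<open>cmod c = 1\<close> by (simp add: complex_norm_square[symmetric])
  show "hnorm ip (T w) = hnorm ip (scal (cnj c) w)"
    by (simp add: isometry_hnorm[OF T] hnorm_scal \<open>cmod c = 1\<close>)
  have "ip (T w) (scal (cnj c) w) = c * cnj c * ip w w"
    by (simp add: ip.scal_right isometry_adjoint[OF T] eigen mult.assoc)
  also have "\<dots> = ip (scal (cnj c) w) (scal (cnj c) w)"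
    by (simp add: ip.scal_left ip.scal_right mult.commute mult.left_commute)
  finally show "Re (ip (T w) (scal (cnj c) w)) = (hnorm ip (scal (cnj c) w))^2"
    by (simp add: hnorm_sq)
qed

end

locale hilbert_isometry = complex_hilbert +
  fixes V :: "'a \<Rightarrow> 'a"
  assumes isometry: "isometry_op scal ip V"
begin

lemma V_zero [simp]: "V 0 = 0"
  using isometry_zero[OF isometry] .

lemma V_funpow_zero [simp]: "(V ^^ n) 0 = 0"
  using isometry_zero[OF isometry_funpow[OF isometry]] .

lemma wold_unitary_part_hsubspace: "hsubspace (wold_unitary_part V)"
  unfolding wold_unitary_part_def
  by (rule hsubspace_Inter) (rule isometry_range_hsubspace[OF isometry_funpow[OF isometry]])

lemma wold_unitary_part_hclosed: "hclosed (wold_unitary_part V)"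
  unfolding wold_unitary_part_def
  by (rule hclosed_Inter) (rule isometry_range_hclosed[OF isometry_funpow[OF isometry]])

lemma V_wold_unitary_part: "V ` wold_unitary_part V = wold_unitary_part V"
proof
  show "V ` wold_unitary_part V \<subseteq> wold_unitary_part V"
  proof (clarsimp simp: wold_unitary_part_def)
    fix y n assume "\<forall>n. y \<in> range (V ^^ n)"
    then obtain z where "y = (V ^^ n) z" by blast
    hence "V y = (V ^^ n) (V z)" by (simp add: funpow_swap1)
    thus "V y \<in> range (V ^^ n)" by simp
  qed
  show "wold_unitary_part V \<subseteq> V ` wold_unitary_part V"
  proof
    fix y assume "y \<in> wold_unitary_part V"
    hence "\<forall>n. \<exists>z. y = (V ^^ Suc n) z" unfolding wold_unitary_part_def by blast
    then obtain z where z: "\<And>n. y = (V ^^ Suc n) (z n)" by metis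
    have "(V ^^ n) (z n) = z 0" for n
      using z[of n] z[of 0] isometry_inj[OF isometry] by (simp add: funpow_swap1)
    hence "z 0 \<in> range (V ^^ n)" for n by (metis rangeI)
    hence "z 0 \<in> wold_unitary_part V" unfolding wold_unitary_part_def by blast
    thus "y \<in> V ` wold_unitary_part V" using z[of 0] by simp
  qed
qed

lemma eigenvector_in_wold_unitary_part:
  assumes "V w = scal c w" "c \<noteq> 0"
  shows "w \<in> wold_unitary_part V"
proof -
  have pow: "(V ^^ n) (scal a w) = scal (a * c ^ n) w" for a n
    by (induction n) (simp_all add: isometry_scal[OF isometry] assms(1) scal_scal mult.commute mult.left_commute)
  have "w = (V ^^ n) (scal (inverse c ^ n) w)" for n
    unfolding pow using \<open>c \<noteq> 0\<close> by (simp add: power_inverse)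
  hence "w \<in> range (V ^^ n)" for n by (metis rangeI)
  thus ?thesis unfolding wold_unitary_part_def by blast
qed

lemma eigenvectors_orthogonal:
  assumes "V p = scal a p" "V m = scal b m" "a * cnj b \<noteq> 1"
  shows "ip p m = 0"
proof -
  have "ip p m = ip (V p) (V m)" by (rule isometry_ip[OF isometry, symmetric])
  also have "\<dots> = a * cnj b * ip p m" unfolding assms ip.scal_left ip.scal_right by (simp add: mult.assoc)
  finally show ?thesis using \<open>a * cnj b \<noteq> 1\<close> mult_cancel_right1 by metis
qed

lemma wold_pure_part_iff: "x \<in> wold_pure_part ip V \<longleftrightarrow> (\<forall>y\<in>wold_unitary_part V. ip x y = 0)"
  unfolding wold_pure_part_def orth_compl_def by simp

lemma wold_decomposition: "\<exists>u\<in>wold_pure_part ip V. \<exists>w\<in>wold_unitary_part V. x = u + w"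
proof -
  obtain w where "w \<in> wold_unitary_part V" "\<forall>y\<in>wold_unitary_part V. ip (x - w) y = 0"
    using orthogonal_projection_exists[OF wold_unitary_part_hsubspace wold_unitary_part_hclosed] by blast
  moreover from this have "x - w \<in> wold_pure_part ip V" unfolding wold_pure_part_iff by blast
  ultimately show ?thesis by (metis diff_add_cancel)
qed

lemma V_wold_pure_part: "V ` wold_pure_part ip V \<subseteq> wold_pure_part ip V"
proof (clarsimp simp: wold_pure_part_iff)
  fix x y assume x: "\<forall>y\<in>wold_unitary_part V. ip x y = 0" and "y \<in> wold_unitary_part V"
  then obtain y' where "y' \<in> wold_unitary_part V" "y = V y'" using V_wold_unitary_part by blast
  thus "ip (V x) y = 0" using x by (simp add: isometry_ip[OF isometry])
qed

lemma pure_on_wold_pure_part: "pure_on V (wold_pure_part ip V)"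
  unfolding pure_on_def
proof (intro conjI V_wold_pure_part equalityI subsetI)
  fix z assume z: "z \<in> (\<Inter>n. (V ^^ n) ` wold_pure_part ip V)"
  hence "z \<in> (V ^^ 0) ` wold_pure_part ip V" by blast
  hence "z \<in> wold_pure_part ip V" by simp
  moreover have "z \<in> wold_unitary_part V" using z unfolding wold_unitary_part_def by blast
  ultimately have "ip z z = 0" unfolding wold_pure_part_iff by blast
  thus "z \<in> {0}" by (simp add: ip_self_eq_0)
next
  fix z :: 'a assume "z \<in> {0}"
  moreover have "0 \<in> wold_pure_part ip V" unfolding wold_pure_part_iff by simp
  ultimately show "z \<in> (\<Inter>n. (V ^^ n) ` wold_pure_part ip V)"
    using V_funpow_zero by (metis INT_I image_eqI singletonD)
qed

abbreviation unitary_plus :: "'a set" where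
  "unitary_plus \<equiv> {h \<in> wold_unitary_part V. V h = h}"

abbreviation unitary_minus :: "'a set" where
  "unitary_minus \<equiv> {h \<in> wold_unitary_part V. V h = - h}"

lemma unitary_plus_minus_orthogonal:
  assumes "p \<in> unitary_plus" "m \<in> unitary_minus" shows "ip p m = 0"
  using assms by (intro eigenvectors_orthogonal[of p 1 m "- 1"]) (simp_all add: scal_minus_one)

end

section \<open>Positive Hankel operators\<close>

locale positive_hankel = hilbert_isometry +
  fixes A :: "'a \<Rightarrow> 'a"
  assumes bounded: "bounded_op scal ip A"
    and positive: "positive_op ip A"
    and hankel: "adjoint_op ip V (A x) = A (V x)"
begin

lemma A_add: "A (x + y) = A x + A y"
  using bounded unfolding bounded_op_def by blast

lemma A_scal: "A (scal a x) = scal a (A x)"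
  using bounded unfolding bounded_op_def by blast

lemma A_zero [simp]: "A 0 = 0"
  using A_add[of 0 0] by simp

lemma A_minus: "A (- x) = - A x"
  using A_add[of x "- x"] by (simp add: add_eq_0_iff2)

lemma Im_A_self: "Im (ip (A x) x) = 0"
  using positive unfolding positive_op_def by blast

lemma Re_A_self_nonneg: "0 \<le> Re (ip (A x) x)"
  using positive unfolding positive_op_def by blast

text \<open>Polarization: a form that is real on the diagonal is Hermitian.\<close>
lemma A_self_adjoint: "ip (A x) y = ip x (A y)"
proof -
  define a b where "a = ip (A x) y" and "b = ip (A y) x"
  have "Im a + Im b = 0"
    using Im_A_self[of "x + y"] Im_A_self[of x] Im_A_self[of y]
    unfolding A_add ip.add_left ip.add_right a_def b_def by simp
  moreover have "Re b - Re a = 0"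
    using Im_A_self[of "x + scal \<i> y"] Im_A_self[of x] Im_A_self[of y]
    unfolding A_add A_scal ip.add_left ip.add_right ip.scal_left ip.scal_right a_def b_def by simp
  ultimately have "b = cnj a" by (simp add: complex_eq_iff)
  thus ?thesis unfolding a_def b_def by (metis ip.cnj_commute)
qed

sublocale A_form: semi_inner_product scal "\<lambda>x y. ip (A x) y"
proof
  show "ip (A (x + y)) z = ip (A x) z + ip (A y) z" for x y z by (simp add: A_add ip.add_left)
  show "ip (A (scal a x)) y = a * ip (A x) y" for a x y by (simp add: A_scal ip.scal_left)
  show "ip (A x) y = cnj (ip (A y) x)" for x y by (metis A_self_adjoint ip.cnj_commute)
qed (rule Re_A_self_nonneg)

lemma A_form_definite: "Re (ip (A x) x) = 0 \<Longrightarrow> x = 0"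
proof -
  assume "Re (ip (A x) x) = 0"
  hence "(cmod (ip (A x) (A x)))^2 \<le> 0" using A_form.cauchy_schwarz[of x "A x"] by simp
  hence "A x = A 0" by (simp add: ip_self_eq_0)
  moreover have "inj A" using positive unfolding positive_op_def by blast
  ultimately show "x = 0" by (blast dest: injD)
qed

lemma hankel_ip: "ip (V y) (A x) = ip y (A (V x))"
  using isometry_adjoint[OF isometry, of y "A x"] by (simp add: hankel)

lemma A_V_symmetric: "ip (A (V x)) y = ip (A x) (V y)"
  by (metis hankel_ip ip.cnj_commute)

definition orbit_form :: "'a \<Rightarrow> nat \<Rightarrow> real" where
  "orbit_form z k = Re (ip (A ((V ^^ k) z)) ((V ^^ k) z))"

lemma orbit_form_pos:
  assumes "z \<noteq> 0" shows "0 < orbit_form z k"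
proof -
  have "(V ^^ k) z \<noteq> 0"
    using isometry_inj[OF isometry_funpow[OF isometry], of k z 0] assms by auto
  hence "orbit_form z k \<noteq> 0" unfolding orbit_form_def using A_form_definite by blast
  thus ?thesis unfolding orbit_form_def using Re_A_self_nonneg by (simp add: order_less_le)
qed

lemma orbit_form_bounded:
  obtains K where "\<And>z k. orbit_form z k \<le> K * (hnorm ip z)^2"
proof -
  obtain K where K: "\<And>x. hnorm ip (A x) \<le> K * hnorm ip x"
    using bounded unfolding bounded_op_def by blast
  have "orbit_form z k \<le> K * (hnorm ip z)^2" for z k
  proof -
    define w where "w = (V ^^ k) z"
    have "orbit_form z k \<le> cmod (ip (A w) w)" unfolding orbit_form_def w_def by (rule complex_Re_le_cmod)
    also have "\<dots> \<le> hnorm ip (A w) * hnorm ip w" by (rule cauchy_schwarz)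
    also have "\<dots> \<le> K * hnorm ip w * hnorm ip w" using K[of w] by (rule mult_right_mono) simp
    also have "hnorm ip w = hnorm ip z" unfolding w_def by (rule isometry_hnorm[OF isometry_funpow[OF isometry]])
    finally show ?thesis by (simp add: power2_eq_square mult.assoc)
  qed
  thus ?thesis using that by blast
qed

lemma orbit_form_log_convex: "(orbit_form z (Suc k))^2 \<le> orbit_form z k * orbit_form z (Suc (Suc k))"
proof -
  define u where "u = (V ^^ k) z"
  have "orbit_form z (Suc k) = Re (ip (A u) (V (V u)))"
    unfolding orbit_form_def u_def by (simp add: A_V_symmetric)
  also have "(Re (ip (A u) (V (V u))))^2 \<le> (cmod (ip (A u) (V (V u))))^2"
    by (simp add: abs_Re_le_cmod power2_le_iff_abs_le)
  also have "\<dots> \<le> Re (ip (A u) u) * Re (ip (A (V (V u))) (V (V u)))"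
    by (rule A_form.cauchy_schwarz)
  also have "\<dots> = orbit_form z k * orbit_form z (Suc (Suc k))"
    unfolding orbit_form_def u_def by simp
  finally show ?thesis .
qed

lemma orbit_form_funpow: "orbit_form ((V ^^ n) z) k = orbit_form z (k + n)"
  unfolding orbit_form_def by (simp add: funpow_add)

text \<open>Write a_k for orbit_form y k. Being positive, bounded and log-convex, (a_k) is
  nonincreasing. Conversely y = V^n z for every n, and the ratio bound along the orbit of z gives
  a_0 \<le> (a_1/a_0)^n K |y|^2 for all n, so a_1/a_0 \<ge> 1.\<close>
lemma orbit_form_Suc_0_wold_unitary_part:
  assumes y: "y \<in> wold_unitary_part V"
  shows "orbit_form y 1 = orbit_form y 0"
proof (cases "y = 0")
  case True thus ?thesis by (simp add: orbit_form_def)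
next
  case False
  obtain K where K: "\<And>z k. orbit_form z k \<le> K * (hnorm ip z)^2" using orbit_form_bounded by blast
  define r where "r = orbit_form y 1 / orbit_form y 0"
  have "orbit_form y (Suc 0) \<le> orbit_form y 0"
    using orbit_form_pos[OF False] orbit_form_log_convex K by (rule bounded_log_convex_decreasing)
  have "0 \<le> r" unfolding r_def using orbit_form_pos[OF False] by (simp add: less_imp_le)
  have "1 \<le> r"
  proof (rule pow_bounded_below_imp_ge_one)
    show "0 < orbit_form y 0" by (rule orbit_form_pos[OF False])
    show "0 \<le> r" by fact
    fix n
    obtain z where z: "y = (V ^^ n) z" using y unfolding wold_unitary_part_def by blast
    have "z \<noteq> 0" using z False by auto
    have "orbit_form z n = orbit_form y 0" "orbit_form z (Suc n) = orbit_form y 1"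
      unfolding z orbit_form_funpow by simp_all
    moreover have "orbit_form z n \<le> (orbit_form z (Suc n) / orbit_form z n)^n * orbit_form z 0"
      using orbit_form_pos[OF \<open>z \<noteq> 0\<close>] orbit_form_log_convex by (rule log_convex_le_ratio_pow) simp
    ultimately have "orbit_form y 0 \<le> r^n * orbit_form z 0" unfolding r_def by simp
    also have "\<dots> \<le> r^n * (K * (hnorm ip y)^2)"
      using K[of z 0] \<open>0 \<le> r\<close> unfolding z isometry_hnorm[OF isometry_funpow[OF isometry]]
      by (simp add: mult_left_mono)
    finally show "orbit_form y 0 \<le> r^n * (K * (hnorm ip y)^2)" .
  qed
  hence "orbit_form y 0 \<le> orbit_form y 1" unfolding r_def using orbit_form_pos[OF False] by simp
  with \<open>orbit_form y (Suc 0) \<le> orbit_form y 0\<close> show ?thesis by simp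
qed

lemma V_involution_on_wold_unitary_part:
  assumes x: "x \<in> wold_unitary_part V"
  shows "V (V x) = x"
proof -
  define p where "p = V (V x)"
  have "V x \<in> wold_unitary_part V" using x V_wold_unitary_part by blast
  hence "orbit_form x 2 = orbit_form x 1"
    using orbit_form_Suc_0_wold_unitary_part[of "V x"] orbit_form_funpow[of 1 x]
    by (simp add: numeral_2_eq_2)
  moreover have "orbit_form x 1 = orbit_form x 0" using orbit_form_Suc_0_wold_unitary_part[OF x] .
  moreover have "orbit_form x 0 = Re (ip (A x) x)" "orbit_form x 1 = Re (ip (A x) p)"
    "orbit_form x 2 = Re (ip (A p) p)"
    unfolding orbit_form_def p_def by (simp_all add: A_V_symmetric numeral_2_eq_2)
  ultimately have "Re (ip (A (p - x)) (p - x)) = 0"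
    using A_form.Re_self_diff[of p x] A_form.Re_swap[of x p] by simp
  hence "p - x = 0" by (rule A_form_definite)
  thus ?thesis unfolding p_def by simp
qed

lemma V_symmetric_on_wold_unitary_part:
  assumes "x \<in> wold_unitary_part V" "y \<in> wold_unitary_part V"
  shows "ip (V x) y = ip x (V y)"
  using isometry_ip[OF isometry, of "V x" y] by (simp add: V_involution_on_wold_unitary_part[OF assms(1)])

lemma wold_unitary_part_plus_minus:
  assumes h: "h \<in> wold_unitary_part V"
  shows "\<exists>p\<in>unitary_plus. \<exists>m\<in>unitary_minus. h = p + m"
proof -
  define p m where "p = scal (1/2) (h + V h)" and "m = scal (1/2) (h - V h)"
  have VV: "V (V h) = h" by (rule V_involution_on_wold_unitary_part[OF h])
  have "V p = p" unfolding p_def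
    by (simp add: isometry_scal[OF isometry] isometry_add[OF isometry] VV add.commute)
  moreover have "V m = - m" unfolding m_def
    by (simp add: isometry_scal[OF isometry] isometry_diff[OF isometry] VV scal_diff_right)
  moreover have "p + m = h"
    unfolding p_def m_def by (simp add: scal_scal flip: scal_add_right scal_two)
  ultimately show ?thesis
    using eigenvector_in_wold_unitary_part[of p 1] eigenvector_in_wold_unitary_part[of m "- 1"]
    by (auto simp: scal_minus_one)
qed

lemma A_unitary_plus: "A ` unitary_plus \<subseteq> unitary_plus"
proof
  fix q assume "q \<in> A ` unitary_plus"
  then obtain p where "V p = p" "q = A p" by blast
  hence "adjoint_op ip V q = scal 1 q" by (simp add: hankel)
  hence "V q = scal (cnj 1) q" by (intro isometry_adjoint_eigenvector[OF isometry]) simp_all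
  thus "q \<in> unitary_plus" using eigenvector_in_wold_unitary_part[of q 1] by simp
qed

lemma A_unitary_minus: "A ` unitary_minus \<subseteq> unitary_minus"
proof
  fix q assume "q \<in> A ` unitary_minus"
  then obtain m where "V m = - m" "q = A m" by blast
  hence "adjoint_op ip V q = scal (- 1) q" by (simp add: hankel A_minus scal_minus_one)
  hence "V q = scal (cnj (- 1)) q" by (intro isometry_adjoint_eigenvector[OF isometry]) simp_all
  thus "q \<in> unitary_minus" using eigenvector_in_wold_unitary_part[of q "- 1"] by (simp add: scal_minus_one)
qed

lemma A_wold_pure_part: "A ` wold_pure_part ip V \<subseteq> wold_pure_part ip V"
proof (clarsimp simp: wold_pure_part_iff)
  fix x y assume x: "\<forall>y\<in>wold_unitary_part V. ip x y = 0" and "y \<in> wold_unitary_part V"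
  then obtain p m where "p \<in> unitary_plus" "m \<in> unitary_minus" "y = p + m"
    using wold_unitary_part_plus_minus by blast
  moreover from this have "A p \<in> wold_unitary_part V" "A m \<in> wold_unitary_part V"
    using A_unitary_plus A_unitary_minus by blast+
  ultimately show "ip (A x) y = 0" using x by (simp add: A_self_adjoint ip.add_right)
qed

lemma unitary_minus_eq_0_if_positive_AV:
  assumes "positive_op ip (A \<circ> V)"
  shows "unitary_minus = {0}"
proof (intro equalityI subsetI)
  fix m assume m: "m \<in> unitary_minus"
  have "0 \<le> Re (ip (A (V m)) m)" using assms unfolding positive_op_def by simp
  hence "Re (ip (A m) m) = 0" using m Re_A_self_nonneg[of m] by (simp add: A_minus ip.minus_left)
  thus "m \<in> {0}" using A_form_definite by simp
qed (use wold_unitary_part_hsubspace in \<open>simp add: hsubspace_def\<close>)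

lemma V_eq_id_if_positive_AV:
  assumes "positive_op ip (A \<circ> V)" "h \<in> wold_unitary_part V"
  shows "V h = h"
  using wold_unitary_part_plus_minus[OF assms(2)] unitary_minus_eq_0_if_positive_AV[OF assms(1)] by auto

end

theorem mainTheorem6:
  fixes scal :: "complex \<Rightarrow> 'a::ab_group_add \<Rightarrow> 'a"
    and ip :: "'a \<Rightarrow> 'a \<Rightarrow> complex"
    and A V :: "'a \<Rightarrow> 'a"
  assumes H: "complex_separable_hilbert scal ip"
    and A_bdd: "bounded_op scal ip A"
    and A_pos: "positive_op ip A"
    and V_iso: "isometry_op scal ip V"
    and hankel: "\<forall>x. adjoint_op ip V (A x) = A (V x)"
  defines "H0 \<equiv> wold_pure_part ip V"
    and "H' \<equiv> wold_unitary_part V"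
    and "Hp \<equiv> {h\<in>wold_unitary_part V. V h = h}"
    and "Hm \<equiv> {h\<in>wold_unitary_part V. V h = - h}"
  shows "(\<forall>x. \<exists>u\<in>H0. \<exists>w\<in>H'. x = u + w)
    \<and> pure_on V H0
    \<and> V ` H' = H'
    \<and> (\<forall>x\<in>H'. V (V x) = x)
    \<and> (\<forall>x\<in>H'. \<forall>y\<in>H'. ip (V x) y = ip x (V y))
    \<and> (\<forall>h\<in>H'. \<exists>p\<in>Hp. \<exists>m\<in>Hm. h = p + m)
    \<and> (\<forall>p\<in>Hp. \<forall>m\<in>Hm. ip p m = 0)
    \<and> A ` H0 \<subseteq> H0 \<and> A ` Hp \<subseteq> Hp \<and> A ` Hm \<subseteq> Hm
    \<and> (positive_op ip (A \<circ> V) \<longrightarrow> Hm = {0} \<and> (\<forall>h\<in>H'. V h = h))"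
proof -
  interpret complex_hilbert scal ip
    using H by (rule complex_separable_hilbert_imp_complex_hilbert)
  interpret positive_hankel scal ip V A
    by unfold_locales (simp_all add: V_iso A_bdd A_pos hankel)
  show ?thesis
    unfolding H0_def H'_def Hp_def Hm_def
    by (intro conjI allI ballI impI wold_decomposition pure_on_wold_pure_part V_wold_unitary_part
        V_involution_on_wold_unitary_part V_symmetric_on_wold_unitary_part
        wold_unitary_part_plus_minus unitary_plus_minus_orthogonal
        A_wold_pure_part A_unitary_plus A_unitary_minus
        unitary_minus_eq_0_if_positive_AV V_eq_id_if_positive_AV)
qed

end
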